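(* Let $f_N=\sum_{k=0}^{N}\binom{N}{k}^3$ denote the $N$-th Franel number. For every non-negative integer $n$, $$v_2(f_{2n+1})\ge 1+v_2\Big(\binom{2n}{n}\Big),\qquad v_2(f_{2n})\ge v_2\Big(\binom{2n}{n}\Big).$$
   Context: $v_2(y)$ denotes the $2$-adic valuation of an integer $y$, i.e. the exponent of the highest power of $2$ dividing $y$. *)

theory Defs
  imports "HOL-Computational_Algebra.Computational_Algebra"
begin

definition franel :: "nat \<Rightarrow> nat" where
  "franel N = (\<Sum>k=0..N. (N choose k) ^ 3)"

end

theory Submission
  imports Defs
begin

text \<open>By Strehl's identity \<open>f\<^sub>N = (\<Sum>k\<le>N. (N choose k)\<^sup>2 * (2k choose N))\<close>, it suffices to
  bound the 2-adic valuation of each summand.  Writing \<open>w m = v\<^sub>2(m!)\<close>, every summand with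
  \<open>N \<le> 2k\<close> has valuation at least \<open>N - w N\<close> (the binary digit sum of \<open>N\<close>): with
  \<open>a = N - k\<close> and \<open>b = 2k - N\<close> this amounts to \<open>w a + w k \<le> w N\<close> and \<open>w (2a) + w b \<le> w N\<close>,
  together with \<open>w (2a) = a + w a\<close>.  Finally \<open>v\<^sub>2 (2n choose n) = 2n - w (2n)\<close> and
  \<open>w (2n + 1) = w (2n)\<close>.\<close>

lemma multiplicity_fact_Suc:
  assumes "prime p"
  shows "multiplicity p (fact (Suc m) :: nat) = multiplicity p (Suc m) + multiplicity p (fact m :: nat)"
proof -
  have "(fact (Suc m) :: nat) = Suc m * fact m"
    by (simp only: fact_Suc of_nat_id)
  then show ?thesis
    using assms by (simp only:) (rule prime_elem_multiplicity_mult_distrib, auto)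
qed

lemma multiplicity_fact_add_le:
  assumes "prime p"
  shows "multiplicity p (fact a :: nat) + multiplicity p (fact b :: nat) \<le> multiplicity p (fact (a + b) :: nat)"
proof -
  have "fact a * fact b dvd (fact (a + b) :: nat)"
    using binomial_fact_lemma[of a "a + b"] by (metis add_diff_cancel_left' dvd_triv_left le_add1)
  then have "multiplicity p (fact a * fact b :: nat) \<le> multiplicity p (fact (a + b) :: nat)"
    by (rule dvd_imp_multiplicity_le) simp
  then show ?thesis
    using assms by (simp add: prime_elem_multiplicity_mult_distrib)
qed

lemma multiplicity_binomial_fact:
  assumes "prime p" and "k \<le> n"
  shows "multiplicity p (n choose k) + multiplicity p (fact k :: nat) + multiplicity p (fact (n - k) :: nat)
       = multiplicity p (fact n :: nat)"
proof -
  have "multiplicity p (fact k * fact (n - k) * (n choose k)) = multiplicity p (fact n :: nat)"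
    by (simp only: binomial_fact_lemma[OF \<open>k \<le> n\<close>])
  moreover have "n choose k \<noteq> 0"
    using \<open>k \<le> n\<close> by simp
  ultimately show ?thesis
    using \<open>prime p\<close> by (simp add: prime_elem_multiplicity_mult_distrib)
qed

lemma multiplicity_two_fact_double:
  "multiplicity 2 (fact (2 * m) :: nat) = m + multiplicity 2 (fact m :: nat)"
proof (induction m)
  case 0
  then show ?case by simp
next
  case (Suc m)
  have odd: "multiplicity (2::nat) (Suc (2 * m)) = 0"
    by (rule not_dvd_imp_multiplicity_0) presburger
  have "multiplicity (2::nat) (2 * Suc m) = Suc (multiplicity 2 (Suc m))"
    by (rule multiplicity_times_same) auto
  then have even: "multiplicity (2::nat) (Suc (Suc (2 * m))) = Suc (multiplicity 2 (Suc m))"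
    by simp
  have "2 * Suc m = Suc (Suc (2 * m))"
    by simp
  then show ?case
    using multiplicity_fact_Suc[of 2 "Suc (2 * m)"] multiplicity_fact_Suc[of 2 "2 * m"]
      multiplicity_fact_Suc[of 2 m] Suc.IH odd even
    by (simp del: fact_Suc)
qed

lemma multiplicity_two_fact_Suc_double:
  "multiplicity 2 (fact (Suc (2 * m)) :: nat) = multiplicity 2 (fact (2 * m) :: nat)"
proof -
  have "multiplicity (2::nat) (Suc (2 * m)) = 0"
    by (rule not_dvd_imp_multiplicity_0) presburger
  then show ?thesis
    using multiplicity_fact_Suc[of 2 "2 * m"] by simp
qed

lemma multiplicity_two_central_binomial:
  "multiplicity 2 ((2 * n) choose n) + multiplicity 2 (fact (2 * n) :: nat) = 2 * n"
  using multiplicity_binomial_fact[of 2 n "2 * n"] multiplicity_two_fact_double[of n] by simp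

lemma binomial_square_products_reindex:
  fixes n j k :: nat
  assumes "j \<le> k" and "k \<le> n"
  shows "(n choose k)\<^sup>2 * ((k choose j) * (k choose (n - j)))
       = (n choose j)\<^sup>2 * (((n - j) choose (k - j)) * (j choose (n - k)))"
proof (cases "n - j \<le> k")
  case True
  have first: "(n choose k) * (k choose j) = (n choose j) * ((n - j) choose (k - j))"
    using choose_mult assms by blast
  have "(n choose k) * (k choose (n - j)) = (n choose (n - j)) * (j choose (k - (n - j)))"
    using choose_mult[of "n - j" k n] True assms by simp
  also have "\<dots> = (n choose j) * (j choose (n - k))"
    using assms True binomial_symmetric[of j n] binomial_symmetric[of "k - (n - j)" j]
    by (simp add: diff_diff_right)
  finally have second: "(n choose k) * (k choose (n - j)) = (n choose j) * (j choose (n - k))" .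
  show ?thesis
    by (simp add: power2_eq_square ac_simps flip: first second)
next
  case False
  then show ?thesis
    by (simp add: binomial_eq_0)
qed

lemma sum_binomial_square_products:
  fixes n j :: nat
  assumes "j \<le> n"
  shows "(\<Sum>k\<le>n. (n choose k)\<^sup>2 * ((k choose j) * (k choose (n - j)))) = (n choose j) ^ 3"
proof -
  have "(\<Sum>k\<le>n. (n choose k)\<^sup>2 * ((k choose j) * (k choose (n - j))))
      = (\<Sum>k=j..n. (n choose k)\<^sup>2 * ((k choose j) * (k choose (n - j))))"
    by (rule sum.mono_neutral_right) (auto simp: binomial_eq_0)
  also have "\<dots> = (n choose j)\<^sup>2 * (\<Sum>k=j..n. ((n - j) choose (k - j)) * (j choose (n - k)))"
    by (simp add: sum_distrib_left binomial_square_products_reindex)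
  also have "(\<Sum>k=j..n. ((n - j) choose (k - j)) * (j choose (n - k)))
           = (\<Sum>i\<le>n - j. ((n - j) choose i) * (j choose (n - j - i)))"
    using assms by (simp add: sum.atLeastAtMost_shift_0 atLeast0AtMost diff_diff_add)
  also have "\<dots> = n choose j"
    using assms vandermonde[of "n - j" j "n - j"] binomial_symmetric[OF assms] by simp
  finally show ?thesis
    by (simp add: power2_eq_square power3_eq_cube)
qed

lemma franel_Strehl: "franel n = (\<Sum>k\<le>n. (n choose k)\<^sup>2 * ((2 * k) choose n))"
proof -
  have "(\<Sum>k\<le>n. (n choose k)\<^sup>2 * ((2 * k) choose n))
      = (\<Sum>k\<le>n. \<Sum>j\<le>n. (n choose k)\<^sup>2 * ((k choose j) * (k choose (n - j))))"
  proof (rule sum.cong[OF refl])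
    fix k
    have "(\<Sum>j\<le>n. (k choose j) * (k choose (n - j))) = (2 * k) choose n"
      by (simp add: vandermonde mult_2)
    then show "(n choose k)\<^sup>2 * ((2 * k) choose n)
             = (\<Sum>j\<le>n. (n choose k)\<^sup>2 * ((k choose j) * (k choose (n - j))))"
      by (simp flip: sum_distrib_left)
  qed
  also have "\<dots> = (\<Sum>j\<le>n. \<Sum>k\<le>n. (n choose k)\<^sup>2 * ((k choose j) * (k choose (n - j))))"
    by (rule sum.swap)
  also have "\<dots> = (\<Sum>j\<le>n. (n choose j) ^ 3)"
    by (simp add: sum_binomial_square_products)
  finally show ?thesis
    by (simp add: franel_def atLeast0AtMost)
qed

lemma multiplicity_two_Strehl_term:
  assumes "k \<le> N" and "N \<le> 2 * k"
  shows "N \<le> multiplicity 2 ((N choose k)\<^sup>2 * ((2 * k) choose N)) + multiplicity 2 (fact N :: nat)"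
proof -
  define w where "w m = multiplicity 2 (fact m :: nat)" for m
  define a where "a = N - k"
  define b where "b = 2 * k - N"
  have N: "N = k + a" and N': "N = 2 * a + b" and k: "k = a + b"
    using assms by (simp_all add: a_def b_def)
  have "multiplicity 2 ((N choose k)\<^sup>2 * ((2 * k) choose N))
      = 2 * multiplicity 2 (N choose k) + multiplicity 2 ((2 * k) choose N)"
    using assms by (simp add: power2_eq_square prime_elem_multiplicity_mult_distrib)
  moreover have "multiplicity 2 (N choose k) + w k + w a = w N"
    using multiplicity_binomial_fact[of 2 k N] assms by (simp add: w_def a_def)
  moreover have "multiplicity 2 ((2 * k) choose N) + w N + w b = k + w k"
    using multiplicity_binomial_fact[of 2 N "2 * k"] multiplicity_two_fact_double[of k] assms
    by (simp add: w_def b_def)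
  moreover have "w k + w a \<le> w N"
    using multiplicity_fact_add_le[of 2 k a] by (simp add: w_def N)
  moreover have "a + w a + w b \<le> w N"
    using multiplicity_fact_add_le[of 2 "2 * a" b] multiplicity_two_fact_double[of a]
    by (simp add: w_def N')
  ultimately show ?thesis
    unfolding w_def[symmetric] using N k by linarith
qed

lemma franel_pos: "franel N > 0"
  unfolding franel_def by (rule sum_pos2[of _ 0]) auto

lemma multiplicity_two_franel: "N \<le> multiplicity 2 (franel N) + multiplicity 2 (fact N :: nat)"
proof -
  define s where "s = N - multiplicity 2 (fact N :: nat)"
  have "(2::nat) ^ s dvd (N choose k)\<^sup>2 * ((2 * k) choose N)" if "k \<le> N" for k
  proof (cases "N \<le> 2 * k")
    case True
    then show ?thesis
      using multiplicity_two_Strehl_term[OF that True] by (intro multiplicity_dvd') (simp add: s_def)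
  qed (simp add: binomial_eq_0)
  then have "2 ^ s dvd franel N"
    unfolding franel_Strehl by (auto intro: dvd_sum)
  then have "s \<le> multiplicity 2 (franel N)"
    using franel_pos by (intro multiplicity_geI) simp_all
  then show ?thesis
    by (simp add: s_def)
qed

theorem corollary4:
  fixes n :: nat
  shows "multiplicity (2::nat) (franel (2*n+1)) \<ge> 1 + multiplicity (2::nat) ((2*n) choose n)
       \<and> multiplicity (2::nat) (franel (2*n)) \<ge> multiplicity (2::nat) ((2*n) choose n)"
  using multiplicity_two_franel[of "2 * n + 1"] multiplicity_two_franel[of "2 * n"]
    multiplicity_two_central_binomial[of n] multiplicity_two_fact_Suc_double[of n]
  by simp

end
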